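(* Let $\mu\in\mathbb{Z}$ and let $S_n(z)=S_n(z;\mu)$, $n\ge -1$, be defined by $S_{-1}=S_0=1$ and $$S_{n+1}S_{n-1}=-z\left[S_n\frac{d^2S_n}{dz^2}-\left(\frac{dS_n}{dz}\right)^2\right]-S_n\frac{dS_n}{dz}+(z+\mu)S_n^2,\qquad n\ge0.$$ Then for all $n>|\mu|$: (a) $z=0$ is a root of $S_n$ of order $\tfrac12(n-|\mu|)(n-|\mu|+1)$; (b) $S_n$ is a monic polynomial in $z$ of degree $\tfrac12n(n+1)$; (c) all other (nonzero) roots of $S_n$ are simple.
   Context: The $S_n(z;\mu)$ are the Umemura polynomials associated with the third Painlevé equation, defined a priori as rational functions by the recurrence in the claim. *)

theory Defs
  imports Complex_Main "HOL-Computational_Algebra.Computational_Algebra"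
    "HOL-Computational_Algebra.Normalized_Fraction" "HOL-Computational_Algebra.Field_as_Ring"
begin

definition rderiv :: "complex poly fract \<Rightarrow> complex poly fract" where
  "rderiv r = (case quot_of_fract r of (p, q) \<Rightarrow>
      Fract (pderiv p * q - p * pderiv q) (q * q))"

text \<open>U mu k = S_(k-1)(z; mu), i.e. U mu 0 = S_(-1), U mu 1 = S_0, and the
  Toda-type recurrence
  S_(n+1) S_(n-1) = -z (S_n S_n'' - (S_n')^2) - S_n S_n' + (z + mu) S_n^2
  solved for S_(n+1) as a rational function.\<close>

fun U :: "int \<Rightarrow> nat \<Rightarrow> complex poly fract" where
  "U mu 0 = 1"
| "U mu (Suc 0) = 1"
| "U mu (Suc (Suc n)) =
     (let s = U mu (Suc n); s' = rderiv s; s'' = rderiv s';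
          zz = to_fract [:0, 1:]
      in (- zz * (s * s'' - s' ^ 2) - s * s' + (zz + of_int mu) * s ^ 2) / U mu n)"

definition Umemura_S :: "int \<Rightarrow> int \<Rightarrow> complex poly fract" where
  "Umemura_S mu n = U mu (nat (n + 1))"

end

theory Submission
  imports Defs
begin

(* Write (A, B, C) = (S_(k-1), S_k, S_(k+1)), so that A C = Phi(B) with Phi = umemura_rhs the
   right-hand side of the recurrence.  Along the recurrence one carries the Hirota identity
   D_z^2 A.B = 0 and the identity A Phi(B)' - 2 A' Phi(B) = (2k+1) A B^2.  The latter shows, by
   comparing orders of vanishing at every root of A, that A divides Phi(B), so C is a polynomial;
   it is equivalent to the Wronskian relation A C' - A' C = (2k+1) B^2, from which both
   identities pass to (B, C).  Comparing degrees gives deg C = 2 deg B + 1 - deg A, and C stays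
   monic.  At a root a <> 0 of B the Hirota identity forces multiplicity one, and
   Phi(B)(a) = a B'(a)^2 <> 0 keeps a from being a root of C.  At z = 0 the Wronskian relation
   gives ord C + ord A - 1 = 2 ord B as soon as ord C <> ord A, which produces the triangular
   numbers; before that, an explicit recurrence for the values at 0 shows that 0 first becomes a
   root exactly at n = |mu| + 1. *)

lemma mult_pderiv_power_mult:
  fixes h X :: "'a::idom poly"
  assumes "pderiv h = 1"
  shows "h * pderiv (h ^ n * X) = h ^ n * (of_nat n * X + h * pderiv X)"
proof (cases n)
  case (Suc m)
  have "h * pderiv (h ^ n) = of_nat n * h ^ n"
    using assms Suc by (simp add: pderiv_power_Suc of_nat_poly algebra_simps del: power_Suc)
      (simp add: power_Suc)
  then show ?thesis by (simp add: pderiv_mult algebra_simps)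
qed simp

lemma order_pderiv_combination:
  fixes X Y :: "'a::field_char_0 poly"
  assumes X: "X \<noteq> 0" and Y: "Y \<noteq> 0"
    and c: "\<alpha> * of_nat (order a X) + \<beta> * of_nat (order a Y) \<noteq> 0"
  shows "smult \<alpha> (pderiv X * Y) + smult \<beta> (X * pderiv Y) \<noteq> 0"
    and "order a (smult \<alpha> (pderiv X * Y) + smult \<beta> (X * pderiv Y)) = order a X + order a Y - 1"
proof -
  define h where "h = [:-a, 1:]"
  define x where "x = order a X"
  define y where "y = order a Y"
  obtain X1 where X1: "X = h ^ x * X1" "\<not> h dvd X1"
    using order_decomp[OF X, of a] unfolding h_def x_def by auto
  obtain Y1 where Y1: "Y = h ^ y * Y1" "\<not> h dvd Y1"
    using order_decomp[OF Y, of a] unfolding h_def y_def by auto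
  define E where "E = smult \<alpha> (pderiv X * Y) + smult \<beta> (X * pderiv Y)"
  define Z where "Z = smult (\<alpha> * of_nat x + \<beta> * of_nat y) (X1 * Y1)
      + h * (smult \<alpha> (pderiv X1 * Y1) + smult \<beta> (X1 * pderiv Y1))"
  have h': "pderiv h = 1" by (simp add: h_def pderiv_pCons)
  have "h * E = smult \<alpha> ((h * pderiv X) * Y) + smult \<beta> (X * (h * pderiv Y))"
    unfolding E_def by (simp add: algebra_simps)
  also have "\<dots> = h ^ (x + y) * Z"
    unfolding X1(1) Y1(1) mult_pderiv_power_mult[OF h'] Z_def
    by (simp add: algebra_simps power_add of_nat_poly smult_add_left smult_add_right)
  finally have hE: "h * E = h ^ (x + y) * Z" .
  have "poly X1 a \<noteq> 0" "poly Y1 a \<noteq> 0"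
    using X1(2) Y1(2) by (simp_all add: h_def poly_eq_0_iff_dvd)
  moreover have "poly Z a = (\<alpha> * of_nat x + \<beta> * of_nat y) * poly X1 a * poly Y1 a"
    by (simp add: Z_def h_def)
  ultimately have Za: "poly Z a \<noteq> 0" using c by (simp add: x_def y_def)
  have h0: "h \<noteq> 0" and oh: "order a h = 1"
    using order_power_n_n[of a 1] by (simp_all add: h_def)
  have "E \<noteq> 0" using hE Za h0 by auto
  moreover have "order a (h * E) = 1 + order a E"
    using \<open>E \<noteq> 0\<close> h0 oh by (simp add: order_mult)
  moreover have "order a (h ^ (x + y) * Z) = x + y"
    using Za by (subst order_mult) (auto simp: h_def order_power_n_n order_0I)
  ultimately show "smult \<alpha> (pderiv X * Y) + smult \<beta> (X * pderiv Y) \<noteq> 0"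
    and "order a (smult \<alpha> (pderiv X * Y) + smult \<beta> (X * pderiv Y)) = order a X + order a Y - 1"
    using hE by (simp_all add: E_def x_def y_def)
qed

definition wronskian :: "'a::idom poly \<Rightarrow> 'a poly \<Rightarrow> 'a poly" where
  "wronskian p q = p * pderiv q - pderiv p * q"

definition hirota2 :: "'a::idom poly \<Rightarrow> 'a poly \<Rightarrow> 'a poly" where
  "hirota2 p q = pderiv (pderiv p) * q - 2 * pderiv p * pderiv q + p * pderiv (pderiv q)"

lemma order_wronskian:
  fixes p q :: "'a::field_char_0 poly"
  assumes "p \<noteq> 0" "q \<noteq> 0" "order a p \<noteq> order a q"
  shows "wronskian p q \<noteq> 0" and "order a (wronskian p q) = order a p + order a q - 1"
proof -
  have w: "wronskian p q = smult 1 (pderiv q * p) + smult (-1) (q * pderiv p)"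
    by (simp add: wronskian_def algebra_simps)
  have "1 * of_nat (order a q) + (-1) * of_nat (order a p) \<noteq> (0 :: 'a)"
    using assms(3) by simp
  from order_pderiv_combination[OF assms(2,1) this] show "wronskian p q \<noteq> 0"
    and "order a (wronskian p q) = order a p + order a q - 1"
    unfolding w by simp_all
qed

lemma pderiv_neq_0_if_root:
  fixes p :: "'a::field_char_0 poly"
  assumes "p \<noteq> 0" "poly p a = 0"
  shows "pderiv p \<noteq> 0"
  using assms order_root[of p a] order_degree[of p a] by (simp add: pderiv_eq_0_iff)

lemma order_const_poly:
  fixes c :: "'a::field_char_0 poly"
  assumes "c \<noteq> 0" "pderiv c = 0"
  shows "order a c = 0"
  using assms order_degree[of c a] by (simp add: pderiv_eq_0_iff)

lemma dvd_if_order_le: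
  fixes p q :: "complex poly"
  assumes "p \<noteq> 0" "q \<noteq> 0" "\<And>a. order a p \<le> order a q"
  shows "p dvd q"
proof -
  have "proots p \<subseteq># proots q" using assms by (simp add: subseteq_mset_def)
  then have "(\<Prod>x\<in>#proots p. [:-x, 1:]) dvd (\<Prod>x\<in>#proots q. [:-x, 1:])"
    by (intro prod_mset_subset_imp_dvd image_mset_subseteq_mono)
  then have "smult (lead_coeff p) (\<Prod>x\<in>#proots p. [:-x, 1:])
      dvd smult (lead_coeff q) (\<Prod>x\<in>#proots q. [:-x, 1:])"
    using assms by (simp add: smult_dvd_iff dvd_smult_iff)
  then show ?thesis by (simp only: complex_poly_decompose_multiset)
qed

lemma dvd_if_pderiv_identity:
  fixes A B P N :: "complex poly"
  assumes A: "A \<noteq> 0" and B: "B \<noteq> 0" and N: "N \<noteq> 0" "pderiv N = 0"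
    and eq: "A * pderiv P - 2 * pderiv A * P = N * A * B^2"
    and bound: "\<And>a. order a A \<le> 2 * order a B + 1"
  shows "A dvd P"
proof (cases "P = 0")
  case False
  have "order a A \<le> order a P" for a
  proof (rule ccontr)
    \<comment> \<open>otherwise comparing orders at a in eq gives order a P = 2 * order a B + 1\<close>
    assume less: "\<not> order a A \<le> order a P"
    have comb: "A * pderiv P - 2 * pderiv A * P
        = smult (-2) (pderiv A * P) + smult 1 (A * pderiv P)"
      by (simp add: algebra_simps numeral_poly)
    have "(-2) * of_nat (order a A) + 1 * of_nat (order a P) \<noteq> (0 :: complex)"
    proof
      assume "(-2) * of_nat (order a A) + 1 * of_nat (order a P) = (0 :: complex)"
      then have "of_nat (order a P) = (of_nat (2 * order a A) :: complex)" by simp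
      then show False using less by (simp only: of_nat_eq_iff)
    qed
    from order_pderiv_combination(2)[OF A False this, folded comb, unfolded eq]
    have "order a (N * A * B^2) = order a A + order a P - 1" .
    moreover have "order a (N * A * B^2) = order a A + 2 * order a B"
      using A B N by (simp add: order_mult order_const_poly power2_eq_square)
    ultimately show False using less bound[of a] by linarith
  qed
  then show ?thesis by (rule dvd_if_order_le[OF A False])
qed simp

lemma order_eq_1_if_hirota2_eq_0:
  fixes A B :: "'a::field_char_0 poly"
  assumes B: "B \<noteq> 0" and H: "hirota2 A B = 0"
    and Aa: "poly A a \<noteq> 0" and Ba: "poly B a = 0"
  shows "order a B = 1"
proof (rule ccontr)
  assume ne: "order a B \<noteq> 1"
  define m where "m = order a B"
  have "m \<ge> 2" using B Ba ne order_root[of B a] unfolding m_def by linarith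
  have B1: "pderiv B \<noteq> 0" by (rule pderiv_neq_0_if_root[OF B Ba])
  have o1: "m = Suc (order a (pderiv B))" unfolding m_def by (rule order_pderiv[OF B Ba])
  then have B1a: "poly (pderiv B) a = 0" using \<open>m \<ge> 2\<close> B1 order_root by fastforce
  have B2: "pderiv (pderiv B) \<noteq> 0" by (rule pderiv_neq_0_if_root[OF B1 B1a])
  have o2: "order a (pderiv B) = Suc (order a (pderiv (pderiv B)))"
    by (rule order_pderiv[OF B1 B1a])
  have A0: "A \<noteq> 0" using Aa by auto
  have "[:-a, 1:] ^ (m - 1) dvd pderiv B"
    using o1 order_1[of a "pderiv B"] by simp
  moreover have "[:-a, 1:] ^ (m - 1) dvd B"
    using B by (simp add: order_divides m_def)
  ultimately have "[:-a, 1:] ^ (m - 1) dvd 2 * pderiv A * pderiv B - pderiv (pderiv A) * B"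
    by (simp add: dvd_diff)
  also have "2 * pderiv A * pderiv B - pderiv (pderiv A) * B = A * pderiv (pderiv B)"
    using H by (simp add: hirota2_def algebra_simps eq_diff_eq)
  finally have "m - 1 \<le> order a (A * pderiv (pderiv B))"
    using A0 B2 by (simp add: order_divides)
  moreover have "order a (A * pderiv (pderiv B)) = m - 2"
    using A0 B2 o1 o2 order_0I[OF Aa] by (simp add: order_mult)
  ultimately show False using \<open>m \<ge> 2\<close> by simp
qed

definition umemura_rhs :: "int \<Rightarrow> complex poly \<Rightarrow> complex poly" where
  "umemura_rhs mu B = - [:0, 1:] * (B * pderiv (pderiv B) - (pderiv B)^2) - B * pderiv B
      + [:of_int mu, 1:] * B^2"

definition umemura_defect :: "int \<Rightarrow> complex poly \<Rightarrow> complex" where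
  "umemura_defect mu B = of_int mu * poly B 0 - poly (pderiv B) 0"

lemma rderiv_to_fract [simp]: "rderiv (to_fract p) = to_fract (pderiv p)"
  by (simp add: rderiv_def Fract_conv_to_fract)

lemma to_fract_umemura_rhs:
  "to_fract (umemura_rhs mu B) =
     (let s = to_fract B; s' = rderiv s; s'' = rderiv s'; zz = to_fract [:0, 1:]
      in - zz * (s * s'' - s' ^ 2) - s * s' + (zz + of_int mu) * s ^ 2)"
proof -
  have "to_fract (of_int mu :: complex poly) = of_int mu"
    by (induct mu rule: int_induct[where k = 0]) simp_all
  moreover have "[:of_int mu, 1:] = [:0, 1:] + (of_int mu :: complex poly)"
    by (simp add: of_int_poly)
  ultimately have mu1: "to_fract [:of_int mu :: complex, 1:] = to_fract [:0, 1:] + of_int mu"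
    by (simp only: to_fract_add)
  show ?thesis
    by (simp only: umemura_rhs_def to_fract_add to_fract_diff to_fract_mult to_fract_uminus
        power2_eq_square Let_def rderiv_to_fract mu1)
qed

lemma U_Suc_Suc_eq:
  assumes "U mu k = to_fract A" "U mu (Suc k) = to_fract B" "A \<noteq> 0" "A * C = umemura_rhs mu B"
  shows "U mu (Suc (Suc k)) = to_fract C"
proof -
  have "U mu (Suc (Suc k)) = to_fract (umemura_rhs mu B) / to_fract A"
    using assms(1,2) by (simp add: to_fract_umemura_rhs Let_def)
  also have "\<dots> = to_fract C"
    using assms(3,4) by (metis nonzero_mult_div_cancel_left to_fract_eq_0_iff to_fract_mult)
  finally show ?thesis .
qed

lemma poly_umemura_rhs_0: "poly (umemura_rhs mu B) 0 = poly B 0 * umemura_defect mu B"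
  by (simp add: umemura_rhs_def umemura_defect_def power2_eq_square algebra_simps)

lemma poly_umemura_rhs_root:
  "poly B a = 0 \<Longrightarrow> poly (umemura_rhs mu B) a = a * poly (pderiv B) a ^ 2"
  by (simp add: umemura_rhs_def power2_eq_square algebra_simps)

lemma monom_power_dvd_umemura_rhs:
  assumes "[:0, 1:] ^ Suc m dvd B"
  shows "[:0, 1:] ^ (2 * m + 1) dvd umemura_rhs mu B"
proof -
  define z :: "complex poly" where "z = [:0, 1:]"
  have z': "pderiv z = 1" by (simp add: z_def pderiv_pCons)
  obtain q where q: "B = z ^ Suc m * q" using assms by (auto simp: z_def)
  define r where "r = of_nat (Suc m) * q + z * pderiv q"
  define s where "s = of_nat m * r + z * pderiv r"
  have "z * pderiv B = z ^ Suc m * r"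
    unfolding q r_def by (rule mult_pderiv_power_mult[OF z'])
  then have d1: "pderiv B = z ^ m * r" by (simp add: z_def mult.assoc)
  have d2: "z * pderiv (pderiv B) = z ^ m * s"
    unfolding d1 s_def by (rule mult_pderiv_power_mult[OF z'])
  have "umemura_rhs mu B = - (B * (z * pderiv (pderiv B))) + z * (pderiv B)^2 - B * pderiv B
      + [:of_int mu, 1:] * B^2"
    by (simp add: umemura_rhs_def z_def algebra_simps)
  also have "\<dots> = - (B * (z ^ m * s)) + z * (z ^ m * r)^2 - B * (z ^ m * r)
      + [:of_int mu, 1:] * B^2"
    unfolding d2 by (simp only: d1)
  also have "\<dots> = z ^ (2 * m + 1) * (- q * s + r^2 - q * r + [:of_int mu, 1:] * z * q^2)"
  proof -
    have pw: "z ^ (2 * m + 1) = z * (z ^ m * z ^ m)" by (simp add: mult_2 power_add)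
    show ?thesis unfolding q pw power_Suc by (simp add: algebra_simps power2_eq_square)
  qed
  finally show ?thesis by (metis dvd_triv_left z_def)
qed

lemma order_0_umemura_rhs:
  assumes "umemura_rhs mu B \<noteq> 0"
  shows "2 * order 0 B \<le> order 0 (umemura_rhs mu B) + 1"
proof (cases "order 0 B")
  case (Suc r)
  then have "[:0, 1:] ^ Suc r dvd B" using order_1[of 0 B] by simp
  then have "[:0, 1:] ^ (2 * r + 1) dvd umemura_rhs mu B"
    by (rule monom_power_dvd_umemura_rhs)
  then have "2 * r + 1 \<le> order 0 (umemura_rhs mu B)"
    using assms order_divides[of 0 "2 * r + 1" "umemura_rhs mu B"] by (simp only: minus_zero) blast
  then show ?thesis using Suc by simp
qed simp

lemma umemura_rhs_degree_lead_coeff: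
  fixes B :: "complex poly"
  assumes B: "B \<noteq> 0"
  shows "degree (umemura_rhs mu B) = 2 * degree B + 1"
    and "lead_coeff (umemura_rhs mu B) = lead_coeff B ^ 2"
proof -
  define d where "d = degree B"
  define R where "R = - [:0, 1:] * (B * pderiv (pderiv B) - (pderiv B)^2) - B * pderiv B
      + [:of_int mu:] * B^2"
  have mu1: "[:of_int mu, 1:] = [:of_int mu:] + [:0, 1:]" by simp
  have rhs: "umemura_rhs mu B = R + [:0, 1:] * B^2"
    unfolding umemura_rhs_def R_def mu1 by (simp only: distrib_right add.assoc)
  have top: "degree ([:0, 1:] * B^2) = 2 * d + 1" "lead_coeff ([:0, 1:] * B^2) = lead_coeff B ^ 2"
    using B by (simp add: degree_mult_eq d_def degree_power_eq)
      (simp add: lead_coeff_mult lead_coeff_power)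
  have "degree R \<le> 2 * d"
  proof (cases "d = 0")
    case True
    then have "pderiv B = 0" by (simp add: pderiv_eq_0_iff d_def)
    then show ?thesis using B True by (simp add: R_def d_def degree_mult_eq degree_power_eq)
  next
    case False
    have "degree (pderiv B) = d - 1" "degree (pderiv (pderiv B)) = d - 2"
      by (simp_all add: degree_pderiv d_def numeral_2_eq_2)
    then have "degree (B * pderiv (pderiv B)) \<le> 2 * d - 1" "degree ((pderiv B)^2) \<le> 2 * d - 1"
      "degree (B * pderiv B) \<le> 2 * d" "degree ([:of_int mu:] * B^2) \<le> 2 * d"
      using False degree_mult_le[of B "pderiv (pderiv B)"] degree_power_le[of "pderiv B" 2]
        degree_mult_le[of B "pderiv B"] degree_power_le[of B 2]
      by (auto simp: d_def)
    then have "degree (B * pderiv (pderiv B) - (pderiv B)^2) \<le> 2 * d - 1"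
      by (meson degree_diff_le)
    then have "degree (- [:0, 1:] * (B * pderiv (pderiv B) - (pderiv B)^2)) \<le> 2 * d"
      using False degree_mult_le[of "- [:0, 1:]" "B * pderiv (pderiv B) - (pderiv B)^2"] by simp
    with \<open>degree (B * pderiv B) \<le> 2 * d\<close> \<open>degree ([:of_int mu:] * B^2) \<le> 2 * d\<close>
    show ?thesis unfolding R_def by (meson degree_add_le degree_diff_le)
  qed
  then have lt: "degree R < degree ([:0, 1:] * B^2)" using top by simp
  show "degree (umemura_rhs mu B) = 2 * degree B + 1"
    using degree_add_eq_right[OF lt] top by (simp add: rhs d_def)
  show "lead_coeff (umemura_rhs mu B) = lead_coeff B ^ 2"
    using lead_coeff_add_le[OF lt] top by (simp add: rhs)
qed

lemma wronskian_quotient: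
  fixes A B C N :: "'a::idom poly"
  assumes "A * pderiv (A * C) - 2 * pderiv A * (A * C) = N * A * B^2" and "A \<noteq> 0"
  shows "wronskian A C = N * B^2"
proof -
  have "A * wronskian A C = A * (N * B^2)"
    using assms(1) by (simp add: wronskian_def pderiv_mult algebra_simps)
  then show ?thesis using assms(2) by simp
qed

lemma hirota2_propagate:
  fixes A B C N :: "'a::idom poly"
  assumes W: "wronskian A C = N * B^2" and N: "pderiv N = 0"
    and H: "hirota2 A B = 0" and A: "A \<noteq> 0"
  shows "hirota2 B C = 0"
proof -
  have "pderiv (wronskian A C) = pderiv (N * B^2)" using W by simp
  then have W': "A * pderiv (pderiv C) - pderiv (pderiv A) * C = 2 * N * B * pderiv B"
    by (simp add: wronskian_def pderiv_mult pderiv_diff N power2_eq_square algebra_simps)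
  have "A * hirota2 B C
     = B * (A * pderiv (pderiv C) - pderiv (pderiv A) * C - 2 * N * B * pderiv B)
       - 2 * pderiv B * (wronskian A C - N * B^2) + C * hirota2 A B"
    by (simp add: hirota2_def wronskian_def algebra_simps power2_eq_square)
  also have "\<dots> = 0" using W W' H by simp
  finally show ?thesis using A by simp
qed

lemma umemura_rhs_identity_propagate:
  fixes A B C N :: "complex poly"
  assumes W: "wronskian A C = N * B^2" and N: "pderiv N = 0"
    and T: "A * C = umemura_rhs mu B" and H: "hirota2 B C = 0" and B: "B \<noteq> 0"
  shows "B * pderiv (umemura_rhs mu C) - 2 * pderiv B * umemura_rhs mu C = (N + 2) * B * C^2"
proof -
  define T where "T = A * C - umemura_rhs mu B"
  define R where "R = wronskian A C - N * B^2"
  have "T = 0" "pderiv T = 0" "R = 0" "pderiv (hirota2 B C) = 0"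
    using W T H by (simp_all add: T_def R_def)
  moreover have "B * (B * pderiv (umemura_rhs mu C) - 2 * pderiv B * umemura_rhs mu C
      - (N + 2) * B * C^2)
     = C * C * R + C * (-2 * pderiv C * T + C * pderiv T) - 2 * B * C * hirota2 B C
       - [:0, 1:] * (B * C * pderiv (hirota2 B C) - pderiv B * C * hirota2 B C
          - B * pderiv C * hirota2 B C)"
    unfolding T_def R_def hirota2_def wronskian_def umemura_rhs_def
    by (simp add: pderiv_mult pderiv_diff pderiv_add pderiv_minus pderiv_pCons pderiv_smult N
        power2_eq_square algebra_simps)
  ultimately show ?thesis using B H by simp
qed

definition tri :: "nat \<Rightarrow> nat" where
  "tri j = j * Suc j div 2"

lemma tri_0 [simp]: "tri 0 = 0"
  by (simp add: tri_def)

lemma tri_Suc: "tri (Suc j) = tri j + Suc j"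
proof -
  have "Suc j * Suc (Suc j) = j * Suc j + 2 * Suc j" by simp
  then show ?thesis unfolding tri_def by simp
qed

lemma tri_mono: "i \<le> j \<Longrightarrow> tri i \<le> tri j"
  unfolding tri_def by (intro div_le_mono mult_le_mono) simp_all

lemma tri_recurrence: "tri (Suc j) + tri (j - 1) = 2 * tri j + 1"
  by (cases j) (simp_all add: tri_Suc)

lemma tri_nat: "0 \<le> j \<Longrightarrow> tri (nat j) = nat (j * (j + 1) div 2)"
  by (simp add: tri_def nat_div_distrib nat_mult_distrib nat_add_distrib)

lemma of_int_power2_eq_of_nat_power2_iff:
  "(of_int mu ^ 2 :: complex) = of_nat k ^ 2 \<longleftrightarrow> nat \<bar>mu\<bar> = k"
proof -
  have "(of_int mu ^ 2 :: complex) = of_nat k ^ 2 \<longleftrightarrow> mu ^ 2 = int k ^ 2"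
    by (metis of_int_eq_iff of_int_of_nat_eq of_int_power)
  also have "\<dots> \<longleftrightarrow> \<bar>mu\<bar> = int k"
    using power2_eq_iff_nonneg[of "\<bar>mu\<bar>" "int k"] by simp
  finally show ?thesis by auto
qed

lemma umemura_defect_recurrence:
  fixes a0 b0 M K :: complex
  assumes a0: "a0 \<noteq> 0" and b0: "b0 \<noteq> 0" and MK: "M^2 \<noteq> K^2"
    and F1: "a0 * c0 = b0 * (M * b0 - b1)"
    and F2: "a0 * c1 - a1 * c0 = (2 * K + 1) * b0^2"
    and V: "(M * b0 - b1) * (M * a0 - a1) = (M^2 - K^2) * a0 * b0"
  shows "M * b0 - b1 \<noteq> 0"
    and "(M * c0 - c1) * (M * b0 - b1) = (M^2 - (K + 1)^2) * b0 * c0"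
proof -
  define e where "e = M * b0 - b1"
  have "(M^2 - K^2) * a0 * b0 \<noteq> 0" using a0 b0 MK by simp
  then show e0: "M * b0 - b1 \<noteq> 0" using V by auto
  have "a0 * (M * b0 * e - (2 * K + 1) * b0^2 - a1 * c0 - (M^2 - (K + 1)^2) * b0^2)
      = b0 * (e * (M * a0 - a1)) - a1 * (a0 * c0 - b0 * e) - (M^2 - K^2) * a0 * b0^2"
    by (simp add: e_def algebra_simps power2_eq_square)
  also have "\<dots> = 0" using V F1 by (simp add: e_def power2_eq_square)
  finally have X: "M * b0 * e - (2 * K + 1) * b0^2 - a1 * c0 = (M^2 - (K + 1)^2) * b0^2"
    using a0 by simp
  have "a0 * ((M * c0 - c1) * e - (M^2 - (K + 1)^2) * b0 * c0)
      = (M * b0 * e - (2 * K + 1) * b0^2 - a1 * c0) * e - (M^2 - (K + 1)^2) * b0 * (b0 * e)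
        + M * e * (a0 * c0 - b0 * e) - e * (a0 * c1 - a1 * c0 - (2 * K + 1) * b0^2)
        + (M^2 - (K + 1)^2) * b0 * (b0 * e - a0 * c0)"
    by (simp add: algebra_simps power2_eq_square)
  also have "\<dots> = 0" using X F1 F2 by (simp add: e_def power2_eq_square)
  finally show "(M * c0 - c1) * (M * b0 - b1) = (M^2 - (K + 1)^2) * b0 * c0"
    using a0 by (simp add: e_def)
qed

(* While k \<le> |mu| neither polynomial vanishes at 0; the defect identity is what detects
   k = |mu|, the step at which 0 becomes a root of the next polynomial. *)
definition umemura_zero_data :: "int \<Rightarrow> nat \<Rightarrow> complex poly \<Rightarrow> complex poly \<Rightarrow> bool" where
  "umemura_zero_data mu k A B \<longleftrightarrow>
     order 0 A = tri (k - Suc (nat \<bar>mu\<bar>)) \<and> order 0 B = tri (k - nat \<bar>mu\<bar>) \<and>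
     (k \<le> nat \<bar>mu\<bar> \<longrightarrow>
        umemura_defect mu B * umemura_defect mu A
          = (of_int mu ^ 2 - of_nat k ^ 2) * poly A 0 * poly B 0 \<and>
        (umemura_defect mu A = 0 \<longrightarrow> umemura_defect mu B = 0))"

lemma umemura_zero_data_step:
  assumes Z: "umemura_zero_data mu k A B"
    and A: "A \<noteq> 0" and B: "B \<noteq> 0" and C: "C \<noteq> 0"
    and T: "A * C = umemura_rhs mu B" and W: "wronskian A C = of_nat (2 * k + 1) * B^2"
  shows "umemura_zero_data mu (Suc k) B C"
proof -
  define m where "m = nat \<bar>mu\<bar>"
  have oA: "order 0 A = tri (k - Suc m)" and oB: "order 0 B = tri (k - m)"
    and V: "k \<le> m \<Longrightarrow> umemura_defect mu B * umemura_defect mu A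
                = (of_int mu ^ 2 - of_nat k ^ 2) * poly A 0 * poly B 0"
    and V0: "k \<le> m \<Longrightarrow> umemura_defect mu A = 0 \<Longrightarrow> umemura_defect mu B = 0"
    using Z by (simp_all add: umemura_zero_data_def m_def)
  have F1: "poly A 0 * poly C 0 = poly B 0 * umemura_defect mu B"
    using arg_cong[OF T, of "\<lambda>p. poly p 0"] by (simp add: poly_umemura_rhs_0)
  have F2: "poly A 0 * poly (pderiv C) 0 - poly (pderiv A) 0 * poly C 0
      = (2 * of_nat k + 1) * poly B 0 ^ 2"
    using arg_cong[OF W, of "\<lambda>p. poly p 0"] by (simp add: wronskian_def of_nat_poly)
  have "order 0 C = tri (Suc k - m)
        \<and> (Suc k \<le> m \<longrightarrow>
             umemura_defect mu C * umemura_defect mu B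
               = (of_int mu ^ 2 - of_nat (Suc k) ^ 2) * poly B 0 * poly C 0 \<and>
             (umemura_defect mu B = 0 \<longrightarrow> umemura_defect mu C = 0))"
  proof (cases "k < m")
    case True
    then have "poly A 0 \<noteq> 0" "poly B 0 \<noteq> 0"
      using oA oB A B by (simp_all add: order_root)
    moreover have "of_int mu ^ 2 \<noteq> (of_nat k ^ 2 :: complex)"
      using True by (simp add: of_int_power2_eq_of_nat_power2_iff m_def)
    ultimately have "umemura_defect mu B \<noteq> 0"
      and "umemura_defect mu C * umemura_defect mu B
             = (of_int mu ^ 2 - of_nat (Suc k) ^ 2) * poly B 0 * poly C 0"
      using umemura_defect_recurrence[of "poly A 0" "poly B 0" "of_int mu" "of_nat k"
          "poly C 0" "poly (pderiv B) 0" "poly (pderiv C) 0" "poly (pderiv A) 0"]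
        F1 F2 V True
      by (simp_all add: umemura_defect_def mult.commute add.commute)
    moreover have "order 0 C = 0"
      using F1 \<open>poly B 0 \<noteq> 0\<close> \<open>umemura_defect mu B \<noteq> 0\<close> by (auto intro: order_0I)
    ultimately show ?thesis using True by simp
  next
    case False
    have ne: "order 0 C \<noteq> order 0 A"
    proof (cases "k = m")
      case True
      then have "poly A 0 \<noteq> 0" "poly B 0 \<noteq> 0"
        using oA oB A B by (simp_all add: order_root)
      moreover have "of_int mu ^ 2 = (of_nat k ^ 2 :: complex)"
        using True of_int_power2_eq_of_nat_power2_iff[of mu k] by (simp add: m_def)
      ultimately have "umemura_defect mu B = 0" using V V0 True by auto
      then have "poly C 0 = 0" using F1 \<open>poly A 0 \<noteq> 0\<close> by simp
      then show ?thesis using C oA True by (simp add: order_root)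
    next
      case False
      with \<open>\<not> k < m\<close> have "k - m = Suc (k - Suc m)" by simp
      then have "order 0 A < order 0 B" using oA oB by (simp add: tri_Suc)
      moreover have "2 * order 0 B \<le> order 0 A + order 0 C + 1"
        using order_0_umemura_rhs[of mu B] order_mult[of A C 0] T A C by (metis no_zero_divisors)
      ultimately show ?thesis by linarith
    qed
    then have "order 0 A + order 0 C - 1 = order 0 (of_nat (2 * k + 1) * B^2)"
      using order_wronskian[OF A C] W by simp
    also have "\<dots> = 2 * order 0 B"
    proof -
      have N: "(of_nat (2 * k + 1) :: complex poly) \<noteq> 0"
        by (metis of_nat_eq_0_iff add_is_0 one_neq_zero)
      moreover have "order 0 (of_nat (2 * k + 1) :: complex poly) = 0"
        using N by (rule order_const_poly) (rule pderiv_of_nat)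
      ultimately show ?thesis
        using B by (simp add: order_mult power2_eq_square)
    qed
    finally have "order 0 A + order 0 C - 1 = 2 * order 0 B" .
    moreover have "tri (Suc (k - m)) + tri (k - Suc m) = 2 * tri (k - m) + 1"
      using tri_recurrence[of "k - m"] by simp
    ultimately have "order 0 C = tri (Suc (k - m))"
      using oA oB ne by linarith
    then show ?thesis using False by (simp add: Suc_diff_le)
  qed
  then show ?thesis using oB by (simp add: umemura_zero_data_def m_def)
qed

lemma nonzero_root_step:
  fixes A B C :: "complex poly"
  assumes B: "B \<noteq> 0" and H: "hirota2 A B = 0" and T: "A * C = umemura_rhs mu B"
    and a: "a \<noteq> 0" and Aa: "poly A a \<noteq> 0" and Ba: "poly B a = 0"
  shows "order a B = 1" and "poly C a \<noteq> 0"
proof -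
  show o1: "order a B = 1" by (rule order_eq_1_if_hirota2_eq_0[OF B H Aa Ba])
  have "pderiv B \<noteq> 0" by (rule pderiv_neq_0_if_root[OF B Ba])
  moreover have "order a (pderiv B) = 0" using order_pderiv[OF B Ba] o1 by simp
  ultimately have "poly (pderiv B) a \<noteq> 0" by (simp add: order_root)
  then have "poly (umemura_rhs mu B) a \<noteq> 0" using poly_umemura_rhs_root[OF Ba] a by simp
  then show "poly C a \<noteq> 0" using T by (metis mult_zero_right poly_mult)
qed

(* The invariant of the pair (A, B) = (U mu k, U mu (Suc k)), i.e. (S_(k-1), S_k). *)
definition umemura_inv :: "int \<Rightarrow> nat \<Rightarrow> complex poly \<Rightarrow> complex poly \<Rightarrow> bool" where
  "umemura_inv mu k A B \<longleftrightarrow>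
     lead_coeff A = 1 \<and> lead_coeff B = 1 \<and> degree A = tri (k - 1) \<and> degree B = tri k \<and>
     hirota2 A B = 0 \<and>
     A * pderiv (umemura_rhs mu B) - 2 * pderiv A * umemura_rhs mu B
       = of_nat (2 * k + 1) * A * B^2 \<and>
     (\<forall>a. a \<noteq> 0 \<longrightarrow> order a A \<le> 1 \<and> (poly A a = 0 \<longrightarrow> poly B a \<noteq> 0)) \<and>
     umemura_zero_data mu k A B"

lemma umemura_inv_0: "umemura_inv mu 0 1 1"
  by (simp add: umemura_inv_def umemura_zero_data_def umemura_defect_def umemura_rhs_def
      hirota2_def pderiv_pCons power2_eq_square)

lemma umemura_inv_step:
  assumes I: "umemura_inv mu k A B"
  obtains C where "A * C = umemura_rhs mu B" and "umemura_inv mu (Suc k) B C"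
proof -
  define N :: "complex poly" where "N = of_nat (2 * k + 1)"
  have A: "A \<noteq> 0" and B: "B \<noteq> 0" and lA: "lead_coeff A = 1" and lB: "lead_coeff B = 1"
    and dA: "degree A = tri (k - 1)" and dB: "degree B = tri k" and H: "hirota2 A B = 0"
    and Q: "A * pderiv (umemura_rhs mu B) - 2 * pderiv A * umemura_rhs mu B = N * A * B^2"
    and roots: "\<And>a. a \<noteq> 0 \<Longrightarrow> order a A \<le> 1 \<and> (poly A a = 0 \<longrightarrow> poly B a \<noteq> 0)"
    and Z: "umemura_zero_data mu k A B"
    using I by (auto simp: umemura_inv_def N_def)
  have N: "N \<noteq> 0" "pderiv N = 0"
    unfolding N_def by (metis of_nat_eq_0_iff add_is_0 one_neq_zero) (rule pderiv_of_nat)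
  have "order a A \<le> 2 * order a B + 1" for a
  proof (cases "a = 0")
    case True
    have "tri (k - Suc (nat \<bar>mu\<bar>)) \<le> tri (k - nat \<bar>mu\<bar>)" by (rule tri_mono) simp
    then show ?thesis using True Z by (simp add: umemura_zero_data_def)
  qed (use roots in fastforce)
  then have "A dvd umemura_rhs mu B" by (rule dvd_if_pderiv_identity[OF A B N Q])
  then obtain C where T: "umemura_rhs mu B = A * C" by (rule dvdE)
  have C: "C \<noteq> 0"
    using umemura_rhs_degree_lead_coeff(2)[OF B, of mu] lB T by auto
  have W: "wronskian A C = N * B^2" by (rule wronskian_quotient[OF Q[unfolded T] A])
  have H': "hirota2 B C = 0" by (rule hirota2_propagate[OF W N(2) H A])
  have Q': "B * pderiv (umemura_rhs mu C) - 2 * pderiv B * umemura_rhs mu C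
      = of_nat (2 * Suc k + 1) * B * C^2"
    using umemura_rhs_identity_propagate[OF W N(2) T[symmetric] H' B] by (simp add: N_def)
  have "degree A + degree C = 2 * degree B + 1"
    using umemura_rhs_degree_lead_coeff(1)[OF B, of mu] T A C by (simp add: degree_mult_eq)
  then have dC: "degree C = tri (Suc k)" using dA dB tri_recurrence[of k] by simp
  have lC: "lead_coeff C = 1"
    using umemura_rhs_degree_lead_coeff(2)[OF B, of mu] T lA lB by (simp add: lead_coeff_mult)
  have roots': "order a B \<le> 1 \<and> (poly B a = 0 \<longrightarrow> poly C a \<noteq> 0)" if "a \<noteq> 0" for a
  proof (cases "poly B a = 0")
    case True
    then have "poly A a \<noteq> 0" using roots \<open>a \<noteq> 0\<close> by blast
    then show ?thesis using nonzero_root_step[OF B H T[symmetric] \<open>a \<noteq> 0\<close> _ True] by simp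
  qed (simp add: order_0I)
  have "umemura_zero_data mu (Suc k) B C"
    using umemura_zero_data_step[OF Z A B C T[symmetric]] W by (simp add: N_def)
  with lB lC dB dC H' Q' roots' have "umemura_inv mu (Suc k) B C"
    by (simp add: umemura_inv_def)
  with T show ?thesis by (intro that) simp_all
qed

lemma U_umemura_inv:
  "\<exists>A B. U mu k = to_fract A \<and> U mu (Suc k) = to_fract B \<and> umemura_inv mu k A B"
proof (induction k)
  case 0
  show ?case using umemura_inv_0 by (intro exI[of _ 1]) simp
next
  case (Suc k)
  then obtain A B
    where AB: "U mu k = to_fract A" "U mu (Suc k) = to_fract B" "umemura_inv mu k A B"
    by blast
  obtain C where "A * C = umemura_rhs mu B" "umemura_inv mu (Suc k) B C"
    using umemura_inv_step[OF AB(3)] .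
  moreover have "A \<noteq> 0" using AB(3) by (auto simp: umemura_inv_def)
  ultimately show ?case using U_Suc_Suc_eq[OF AB(1,2)] AB(2) by blast
qed

theorem theorem4p5:
  fixes mu :: int and n :: int
  assumes "n > \<bar>mu\<bar>"
  shows "\<exists>p :: complex poly.
           Umemura_S mu n = to_fract p \<and>
           order 0 p = nat ((n - \<bar>mu\<bar>) * (n - \<bar>mu\<bar> + 1) div 2) \<and>
           lead_coeff p = 1 \<and>
           degree p = nat (n * (n + 1) div 2) \<and>
           (\<forall>a. a \<noteq> 0 \<and> poly p a = 0 \<longrightarrow> order a p = 1)"
proof -
  obtain A B where S: "Umemura_S mu n = to_fract A" and I: "umemura_inv mu (nat (n + 1)) A B"
    using U_umemura_inv[of mu "nat (n + 1)"] unfolding Umemura_S_def by blast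
  have "order 0 A = tri (nat (n + 1) - Suc (nat \<bar>mu\<bar>))" and "lead_coeff A = 1"
    and "degree A = tri (nat (n + 1) - 1)" and simple: "\<And>a. a \<noteq> 0 \<Longrightarrow> order a A \<le> 1"
    using I unfolding umemura_inv_def umemura_zero_data_def by blast+
  moreover have "nat (n + 1) - Suc (nat \<bar>mu\<bar>) = nat (n - \<bar>mu\<bar>)" "nat (n + 1) - 1 = nat n"
    and "0 \<le> n - \<bar>mu\<bar>" "0 \<le> n"
    using assms by simp_all
  ultimately have "order 0 A = nat ((n - \<bar>mu\<bar>) * (n - \<bar>mu\<bar> + 1) div 2)"
    and "degree A = nat (n * (n + 1) div 2)"
    by (simp_all add: tri_nat)
  moreover have "order a A = 1" if "a \<noteq> 0" "poly A a = 0" for a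
    using simple[of a] that \<open>lead_coeff A = 1\<close> by (auto simp: order_root)
  ultimately show ?thesis using S \<open>lead_coeff A = 1\<close> by blast
qed

end
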